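(* Let $P\in N_1$ be a sum of $9$ monomials, not necessarily distinct (i.e. $P(1)=9$). Then $P$ has unique factorisation inside $N_1$: any two factorisations of $P$ into irreducible elements of $N_1$ coincide up to the order of the factors.
   Context: $N_1=\mathbb{Z}_{\ge0}[X]$ is the semiring of univariate polynomials with nonnegative integer coefficients. An element $Q\neq0,1$ of $N_1$ is irreducible if in every factorisation $Q=ST$ with $S,T\in N_1$ one of $S,T$ is $1$. *)

theory Defs
  imports "HOL-Computational_Algebra.Polynomial" "HOL-Library.Multiset"
begin

text \<open>N_1 = Z_{>=0}[X] is modelled by the type nat poly.
  An element Q /= 0,1 of N_1 is irreducible if in every factorisation Q = S T
  with S, T in N_1 one of S, T is 1.\<close>

definition irreducible_N1 :: "nat poly \<Rightarrow> bool" where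
  "irreducible_N1 Q \<longleftrightarrow> Q \<noteq> 0 \<and> Q \<noteq> 1 \<and> (\<forall>S T. Q = S * T \<longrightarrow> S = 1 \<or> T = 1)"

end

theory Submission
  imports Defs
begin

text \<open>Write X for \<open>monom 1 1\<close>. Evaluating at 1 is multiplicative and counts monomials, so an
  irreducible factor other than X has value at least 2, and the X-free part of a factorisation of
  P is either a single irreducible of value 9 or a product of two factors of value 3, i.e. of
  trinomials \<open>1 + X\<^sup>a + X\<^sup>b\<close>. The power of X is read off from the lowest coefficient, one
  irreducible is never a product of two factors of value 3, and the exponent multiset of a
  product of two trinomials determines the two trinomials: its least nonzero element, its
  maximum and its sum recover the exponents successively.\<close>

text \<open>An element of N_1 is the same as the multiset of exponents of its monomials, counted with
  multiplicity; its value at 1 is the size of that multiset.\<close>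

definition poly_of_exps :: "nat multiset \<Rightarrow> nat poly" where
  "poly_of_exps N = (\<Sum>k\<in>#N. monom 1 k)"

abbreviation trinomial :: "nat \<Rightarrow> nat \<Rightarrow> nat poly" where
  "trinomial a b \<equiv> poly_of_exps {#0, a, b#}"

definition exps :: "nat poly \<Rightarrow> nat multiset" where
  "exps Q = Abs_multiset (coeff Q)"

lemma coeff_poly_of_exps: "coeff (poly_of_exps N) k = count N k"
  by (induction N) (auto simp: poly_of_exps_def)

lemma poly_of_exps_inject: "poly_of_exps M = poly_of_exps N \<longleftrightarrow> M = N"
  by (metis coeff_poly_of_exps multiset_eqI)

lemma poly_poly_of_exps_1: "poly (poly_of_exps N) 1 = size N"
  by (induction N) (auto simp: poly_of_exps_def poly_monom)

lemma count_exps: "count (exps Q) = coeff Q"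
proof -
  have "{k. 0 < coeff Q k} \<subseteq> {..degree Q}"
    using le_degree by (auto simp: subset_eq)
  then have "finite {k. 0 < coeff Q k}"
    using finite_subset by blast
  then show ?thesis
    unfolding exps_def by (rule count_Abs_multiset)
qed

lemma poly_of_exps_exps: "poly_of_exps (exps Q) = Q"
  by (simp add: poly_eq_iff coeff_poly_of_exps count_exps)

lemma size_exps: "size (exps Q) = poly Q 1"
  by (metis poly_of_exps_exps poly_poly_of_exps_1)

lemma trinomial_mult:
  "trinomial a b * trinomial c d =
     poly_of_exps {#0, a, b, c, d, a + c, a + d, b + c, b + d#}"
  by (simp add: poly_of_exps_def algebra_simps mult_monom)

lemma nat_poly_1_eq_0_iff: "poly (Q :: nat poly) 1 = 0 \<longleftrightarrow> Q = 0"
proof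
  assume "poly Q 1 = 0"
  then have "exps Q = {#}"
    using size_exps[of Q] by simp
  then show "Q = 0"
    by (metis poly_of_exps_exps poly_of_exps_def image_mset_empty sum_mset.empty)
qed simp

lemma nat_poly_1_eq_1_imp_monom:
  assumes "poly (Q :: nat poly) 1 = 1"
  obtains k where "Q = monom 1 k"
proof -
  from assms obtain k where "exps Q = {#k#}"
    using size_1_singleton_mset[of "exps Q"] by (auto simp: size_exps)
  then have "Q = poly_of_exps {#k#}"
    by (metis poly_of_exps_exps)
  then show ?thesis
    using that by (simp add: poly_of_exps_def)
qed

lemma nat_poly_1_eq_3_imp_trinomial:
  assumes "poly (Q :: nat poly) 1 = 3" "coeff Q 0 \<noteq> 0"
  obtains a b where "a \<le> b" "Q = trinomial a b"
proof -
  from assms(2) have "0 \<in># exps Q"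
    by (simp add: count_exps[symmetric])
  then obtain N where N: "exps Q = add_mset 0 N"
    by (metis insert_DiffM)
  with assms(1) have "size N = 2"
    using size_exps[of Q] by simp
  then obtain a N' where "N = add_mset a N'"
    using size_eq_Suc_imp_eq_union[of N 1] by auto
  with \<open>size N = 2\<close> obtain b where "N = {#a, b#}"
    using size_1_singleton_mset[of N'] by auto
  with N have "Q = trinomial a b"
    by (metis poly_of_exps_exps)
  then show ?thesis
    using that by (metis add_mset_commute nat_le_linear)
qed

lemma monom_mult_cancel:
  fixes Q Q' :: "nat poly"
  assumes "monom 1 m * Q = monom 1 m' * Q'" "coeff Q 0 \<noteq> 0" "coeff Q' 0 \<noteq> 0"
  shows "m = m'" "Q = Q'"
proof -
  have coeff_eq: "coeff (monom 1 m * Q) k = coeff (monom 1 m' * Q') k" for k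
    using assms(1) by simp
  show "m = m'"
  proof (rule ccontr)
    assume "m \<noteq> m'"
    then consider "m < m'" | "m' < m"
      by linarith
    then show False
      using coeff_eq[of m] coeff_eq[of m'] assms(2,3) by cases (simp_all add: coeff_monom_mult)
  qed
  show "Q = Q'"
  proof (rule poly_eqI)
    show "coeff Q k = coeff Q' k" for k
      using coeff_eq[of "k + m"] \<open>m = m'\<close> by (simp add: coeff_monom_mult)
  qed
qed

lemma coeff_0_prod_mset_nonzero:
  fixes M :: "'a :: {comm_semiring_1, semiring_no_zero_divisors} poly multiset"
  shows "(\<And>Q. Q \<in># M \<Longrightarrow> coeff Q 0 \<noteq> 0) \<Longrightarrow> coeff (prod_mset M) 0 \<noteq> 0"
  by (induction M) (auto simp: coeff_mult_0)

lemma nat_prod_mset_eq_9_cases: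
  fixes M :: "nat multiset"
  assumes ge_2: "\<forall>n\<in>#M. 2 \<le> n" and prod: "prod_mset M = 9"
  shows "M = {#9#} \<or> M = {#3, 3#}"
proof -
  have elem: "n = 3 \<or> n = 9" if "n \<in># M" for n
  proof -
    have "n dvd 9"
      using dvd_prod_mset[OF that] prod by simp
    moreover have "n \<le> 9"
      using \<open>n dvd 9\<close> by (simp add: dvd_imp_le)
    ultimately have "n \<in> {2, 3, 4, 5, 6, 7, 8, 9}"
      using ge_2 that by auto
    then show ?thesis
      using \<open>n dvd 9\<close> by auto
  qed
  then have "\<forall>n\<in>#M. 3 \<le> n"
    by fastforce
  then have "3 ^ size M \<le> prod_mset M"
    by (induction M) (auto intro: mult_mono)
  have "size M < 3"
  proof (rule ccontr)
    assume "\<not> size M < 3"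
    then have "(3::nat) ^ 3 \<le> 3 ^ size M"
      by (intro power_increasing) auto
    with \<open>3 ^ size M \<le> prod_mset M\<close> prod show False
      by simp
  qed
  obtain n N where M: "M = add_mset n N"
    using prod by (cases M) auto
  show ?thesis
  proof (cases N)
    case empty
    with M prod show ?thesis
      by simp
  next
    case (add n' N')
    with M \<open>size M < 3\<close> have M2: "M = {#n, n'#}"
      by simp
    then have "n = 3 \<and> n' = 3"
      using elem[of n] elem[of n'] prod by auto
    with M2 show ?thesis
      by simp
  qed
qed

lemma monom_1_1_mult: "monom 1 1 * q = pCons 0 (q :: 'a :: comm_semiring_1 poly)"
  by (metis One_nat_def monom_Suc monom_eq_1 mult_1 mult_pCons_left smult_0_left add_0)

lemma irreducible_N1_coeff_0:
  assumes "irreducible_N1 Q" "Q \<noteq> monom 1 1"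
  shows "coeff Q 0 \<noteq> 0"
proof
  assume "coeff Q 0 = 0"
  then obtain q where "Q = pCons 0 q"
    by (cases Q) simp
  then have "Q = monom 1 1 * q"
    by (simp only: monom_1_1_mult)
  with assms(1) have "monom 1 1 = (1 :: nat poly) \<or> q = 1"
    unfolding irreducible_N1_def by blast
  with \<open>Q = monom 1 1 * q\<close> assms(2) show False
    by (auto simp only: monom_eq_1_iff mult_1_right)
qed

lemma irreducible_N1_poly_1_ge_2:
  assumes "irreducible_N1 Q" "Q \<noteq> monom 1 1"
  shows "2 \<le> poly Q 1"
proof -
  have "poly Q 1 \<noteq> 0"
    using assms(1) nat_poly_1_eq_0_iff unfolding irreducible_N1_def by blast
  moreover have "poly Q 1 \<noteq> 1"
  proof
    assume "poly Q 1 = 1"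
    then obtain k where k: "Q = monom 1 k"
      by (rule nat_poly_1_eq_1_imp_monom)
    with irreducible_N1_coeff_0[OF assms] have "Q = 1"
      by (metis coeff_monom monom_eq_1)
    with assms(1) show False
      unfolding irreducible_N1_def by blast
  qed
  ultimately show ?thesis
    by linarith
qed

lemma poly_1_plus_degree_less_mult:
  fixes S T :: "nat poly"
  assumes "S \<noteq> 0" "T \<noteq> 0" "T \<noteq> 1"
  shows "poly S 1 + degree S < poly (S * T) 1 + degree (S * T)"
proof -
  have degree: "degree (S * T) = degree S + degree T"
    using assms(1,2) by (rule degree_mult_eq)
  have "poly S 1 \<noteq> 0" "poly T 1 \<noteq> 0"
    using assms(1,2) nat_poly_1_eq_0_iff by blast+
  show ?thesis
  proof (cases "poly T 1 = 1")
    case True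
    then obtain k where k: "T = monom 1 k"
      by (rule nat_poly_1_eq_1_imp_monom)
    with assms(3) have "k \<noteq> 0"
      by (auto simp: monom_eq_1_iff)
    with k True degree show ?thesis
      by (simp add: degree_monom_eq)
  next
    case False
    with \<open>poly S 1 \<noteq> 0\<close> \<open>poly T 1 \<noteq> 0\<close> have "poly S 1 < poly S 1 * poly T 1"
      by simp
    with degree show ?thesis
      by (simp only: poly_mult)
  qed
qed

lemma irreducible_N1_factorisation_exists:
  fixes Q :: "nat poly"
  assumes "Q \<noteq> 0"
  shows "\<exists>A. (\<forall>R\<in>#A. irreducible_N1 R) \<and> prod_mset A = Q"
  using assms
proof (induction "poly Q 1 + degree Q" arbitrary: Q rule: less_induct)
  case less
  show ?case
  proof (cases "Q = 1 \<or> irreducible_N1 Q")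
    case True
    then show ?thesis
    proof
      assume "Q = 1"
      then show ?thesis
        by (intro exI[of _ "{#}"]) simp
    next
      assume "irreducible_N1 Q"
      then show ?thesis
        by (intro exI[of _ "{#Q#}"]) simp
    qed
  next
    case False
    with less.prems obtain S T where ST: "Q = S * T" "S \<noteq> 1" "T \<noteq> 1"
      unfolding irreducible_N1_def by blast
    with less.prems have "S \<noteq> 0" "T \<noteq> 0"
      by auto
    have "poly S 1 + degree S < poly Q 1 + degree Q"
      using poly_1_plus_degree_less_mult[OF \<open>S \<noteq> 0\<close> \<open>T \<noteq> 0\<close> \<open>T \<noteq> 1\<close>] ST(1) by simp
    moreover have "poly T 1 + degree T < poly Q 1 + degree Q"
      using poly_1_plus_degree_less_mult[OF \<open>T \<noteq> 0\<close> \<open>S \<noteq> 0\<close> \<open>S \<noteq> 1\<close>] ST(1)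
      by (simp add: mult.commute)
    ultimately obtain A B where "\<forall>R\<in>#A. irreducible_N1 R" "prod_mset A = S"
      and "\<forall>R\<in>#B. irreducible_N1 R" "prod_mset B = T"
      using less.hyps \<open>S \<noteq> 0\<close> \<open>T \<noteq> 0\<close> by meson
    then show ?thesis
      using ST(1) by (intro exI[of _ "A + B"]) auto
  qed
qed

lemma nat_pair_eq_by_sum_and_min:
  fixes b d b' d' :: nat
  assumes "b' + d' = b + d" "min b d = min b' d'"
  shows "b' = b \<and> d' = d \<or> b' = d \<and> d' = b"
  using assms by (auto simp: min_def split: if_splits)

lemma exps_of_trinomial_product_determine_factors:
  fixes a b c d a' b' c' d' :: nat
  assumes "a \<le> b" "c \<le> d" "a \<le> c" "a' \<le> b'" "c' \<le> d'" "a' \<le> c'"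
    and eq: "{#a, b, c, d, a + c, a + d, b + c, b + d#} =
             {#a', b', c', d', a' + c', a' + d', b' + c', b' + d'#}"
  shows "(a, b, c, d) = (a', b', c', d') \<or> (a, b, c, d) = (c', d', a', b')"
proof -
  have bounds: "a \<le> x \<and> x \<le> b + d" if "x \<in># {#a, b, c, d, a + c, a + d, b + c, b + d#}" for x
    using that assms(1-3) by auto
  have bounds': "a' \<le> x \<and> x \<le> b' + d'"
    if "x \<in># {#a', b', c', d', a' + c', a' + d', b' + c', b' + d'#}" for x
    using that assms(4-6) by auto
  have "a \<le> a'" "b' + d' \<le> b + d"
    using bounds[of a'] bounds[of "b' + d'"] unfolding eq by auto
  moreover have "a' \<le> a" "b + d \<le> b' + d'"
    using bounds'[of a] bounds'[of "b + d"] unfolding eq[symmetric] by auto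
  ultimately have a: "a' = a" and bd: "b' + d' = b + d"
    by simp_all
  from eq[THEN arg_cong[of _ _ sum_mset]] have "a + b + c + d = a' + b' + c' + d'"
    by simp
  with a bd have c: "c' = c"
    by simp
  from eq have "{#b, d, a + d, b + c#} + {#a, c, a + c, b + d#} =
      {#b', d', a + d', b' + c#} + {#a, c, a + c, b + d#}"
    unfolding a c bd by (simp add: add_mset_commute)
  then have rest: "{#b, d, a + d, b + c#} = {#b', d', a + d', b' + c#}"
    by simp
  \<comment> \<open>the least of the remaining four exponents is \<open>min b d\<close>, which with \<open>b + d\<close> fixes \<open>{b, d}\<close>\<close>
  have "min b d \<le> x" if "x \<in># {#b', d', a + d', b' + c#}" for x
    using that unfolding rest[symmetric] by auto
  moreover have "min b' d' \<le> x" if "x \<in># {#b, d, a + d, b + c#}" for x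
    using that unfolding rest by auto
  ultimately have "min b d = min b' d'"
    by (intro antisym) simp_all
  with bd consider "b' = b" "d' = d" | "b' = d" "d' = b" "b \<noteq> d"
    by (metis nat_pair_eq_by_sum_and_min)
  then show ?thesis
  proof cases
    case 1
    with a c show ?thesis
      by simp
  next
    case 2
    with rest have "{#a + d, b + c#} = {#a + b, d + c#}"
      by (simp add: add_mset_commute)
    with 2 have "c = a"
      by (auto simp: add_eq_conv_ex)
    with 2 a c show ?thesis
      by simp
  qed
qed

lemma trinomial_mult_cancel_sorted:
  assumes "a \<le> b" "c \<le> d" "a \<le> c" "a' \<le> b'" "c' \<le> d'" "a' \<le> c'"
    and "trinomial a b * trinomial c d = trinomial a' b' * trinomial c' d'"
  shows "{#trinomial a b, trinomial c d#} = {#trinomial a' b', trinomial c' d'#}"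
proof -
  from assms(7) have "{#0, a, b, c, d, a + c, a + d, b + c, b + d#} =
      {#0, a', b', c', d', a' + c', a' + d', b' + c', b' + d'#}"
    by (simp add: trinomial_mult poly_of_exps_inject)
  then have "(a, b, c, d) = (a', b', c', d') \<or> (a, b, c, d) = (c', d', a', b')"
    using assms(1-6) by (intro exps_of_trinomial_product_determine_factors) simp_all
  then show ?thesis
    by (elim disjE) (simp_all add: add_mset_commute)
qed

lemma trinomial_pair_sorted:
  assumes "a \<le> b" "c \<le> d"
  obtains p q r s where "p \<le> q" "r \<le> s" "p \<le> r"
    "{#trinomial a b, trinomial c d#} = {#trinomial p q, trinomial r s#}"
proof (cases "a \<le> c")
  case True
  with assms show ?thesis
    using that[of a b c d] by simp
next
  case False
  with assms show ?thesis
    using that[of c d a b] by (simp add: add_mset_commute)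
qed

lemma trinomial_mult_cancel:
  assumes "a \<le> b" "c \<le> d" "a' \<le> b'" "c' \<le> d'"
    and "trinomial a b * trinomial c d = trinomial a' b' * trinomial c' d'"
  shows "{#trinomial a b, trinomial c d#} = {#trinomial a' b', trinomial c' d'#}"
proof -
  obtain p q r s where pqrs: "p \<le> q" "r \<le> s" "p \<le> r"
    and AB: "{#trinomial a b, trinomial c d#} = {#trinomial p q, trinomial r s#}"
    using assms(1,2) by (rule trinomial_pair_sorted)
  obtain p' q' r' s' where pqrs': "p' \<le> q'" "r' \<le> s'" "p' \<le> r'"
    and AB': "{#trinomial a' b', trinomial c' d'#} = {#trinomial p' q', trinomial r' s'#}"
    using assms(3,4) by (rule trinomial_pair_sorted)
  from assms(5) have "prod_mset {#trinomial a b, trinomial c d#} = prod_mset {#trinomial a' b', trinomial c' d'#}"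
    by simp
  then have "trinomial p q * trinomial r s = trinomial p' q' * trinomial r' s'"
    unfolding AB AB' by simp
  with AB AB' show ?thesis
    using trinomial_mult_cancel_sorted[OF pqrs pqrs'] by simp
qed

lemma X_free_irreducible_factors_of_value_9:
  assumes irr: "\<forall>Q\<in>#A. irreducible_N1 Q \<and> Q \<noteq> monom 1 1" and nine: "poly (prod_mset A) 1 = 9"
  shows "(\<exists>U. A = {#U#}) \<or> (\<exists>a b c d. a \<le> b \<and> c \<le> d \<and> A = {#trinomial a b, trinomial c d#})"
proof -
  let ?V = "image_mset (\<lambda>Q. poly Q 1) A"
  have "\<forall>n\<in>#?V. 2 \<le> n"
    using irr irreducible_N1_poly_1_ge_2 by auto
  moreover have "prod_mset ?V = 9"
    using nine poly_prod_mset[of "\<lambda>Q. Q" A 1] by simp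
  ultimately consider "?V = {#9#}" | "?V = {#3, 3#}"
    using nat_prod_mset_eq_9_cases by blast
  then show ?thesis
  proof cases
    case 1
    then have "size A = 1"
      by (metis size_image_mset size_single)
    then show ?thesis
      using size_1_singleton_mset by blast
  next
    case 2
    then obtain S T where A: "A = {#S, T#}" and "poly S 1 = 3" "poly T 1 = 3"
      by (auto dest!: msed_map_invR)
    from A irr have "irreducible_N1 S \<and> S \<noteq> monom 1 1" "irreducible_N1 T \<and> T \<noteq> monom 1 1"
      by simp_all
    then have "coeff S 0 \<noteq> 0" "coeff T 0 \<noteq> 0"
      using irreducible_N1_coeff_0 by blast+
    obtain a b where "a \<le> b" "S = trinomial a b"
      using \<open>poly S 1 = 3\<close> \<open>coeff S 0 \<noteq> 0\<close> by (rule nat_poly_1_eq_3_imp_trinomial)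
    moreover obtain c d where "c \<le> d" "T = trinomial c d"
      using \<open>poly T 1 = 3\<close> \<open>coeff T 0 \<noteq> 0\<close> by (rule nat_poly_1_eq_3_imp_trinomial)
    ultimately show ?thesis
      using A by (intro disjI2 exI[of _ a] exI[of _ b] exI[of _ c] exI[of _ d]) simp
  qed
qed

lemma not_irreducible_N1_trinomial_mult: "\<not> irreducible_N1 (trinomial a b * trinomial c d)"
proof -
  have "trinomial a b \<noteq> 1" "trinomial c d \<noteq> 1"
    using poly_poly_of_exps_1[of "{#0, a, b#}"] poly_poly_of_exps_1[of "{#0, c, d#}"] by auto
  then show ?thesis
    unfolding irreducible_N1_def by blast
qed

lemma X_free_irreducible_factorisation_of_value_9_unique:
  assumes irr_A: "\<forall>Q\<in>#A. irreducible_N1 Q \<and> Q \<noteq> monom 1 1"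
    and irr_B: "\<forall>Q\<in>#B. irreducible_N1 Q \<and> Q \<noteq> monom 1 1"
    and prod: "prod_mset A = prod_mset B" and nine: "poly (prod_mset A) 1 = 9"
  shows "A = B"
  using X_free_irreducible_factors_of_value_9[OF irr_A nine]
    X_free_irreducible_factors_of_value_9[OF irr_B nine[unfolded prod]]
proof (elim disjE exE conjE)
  fix U U' assume "A = {#U#}" "B = {#U'#}"
  with prod show ?thesis
    by simp
next
  fix U a b c d assume "A = {#U#}" "B = {#trinomial a b, trinomial c d#}"
  with prod irr_A have "irreducible_N1 (trinomial a b * trinomial c d)"
    by simp
  then show ?thesis
    using not_irreducible_N1_trinomial_mult by blast
next
  fix U a b c d assume "A = {#trinomial a b, trinomial c d#}" "B = {#U#}"
  with prod irr_B have "irreducible_N1 (trinomial a b * trinomial c d)"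
    by simp
  then show ?thesis
    using not_irreducible_N1_trinomial_mult by blast
next
  fix a b c d a' b' c' d'
  assume sorted: "a \<le> b" "c \<le> d" and A: "A = {#trinomial a b, trinomial c d#}"
    and sorted': "a' \<le> b'" "c' \<le> d'" and B: "B = {#trinomial a' b', trinomial c' d'#}"
  from prod have "trinomial a b * trinomial c d = trinomial a' b' * trinomial c' d'"
    unfolding A B by simp
  with A B show ?thesis
    using trinomial_mult_cancel[OF sorted sorted'] by simp
qed

lemma prod_mset_split_monom_1_1:
  "prod_mset A = monom 1 (count A (monom 1 1)) * prod_mset (filter_mset (\<lambda>Q. Q \<noteq> monom 1 1) A)"
  for A :: "'a :: comm_semiring_1 poly multiset"
proof -
  have "A = filter_mset (\<lambda>Q. Q = monom 1 1) A + filter_mset (\<lambda>Q. Q \<noteq> monom 1 1) A"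
    by (rule multiset_partition)
  then have "prod_mset A =
      prod_mset (filter_mset (\<lambda>Q. Q = monom 1 1) A) * prod_mset (filter_mset (\<lambda>Q. Q \<noteq> monom 1 1) A)"
    by (metis prod_mset.union)
  then show ?thesis
    by (simp add: filter_eq_replicate_mset monom_power)
qed

lemma multiset_eq_by_count_and_filter_neq:
  assumes "count A x = count B x" "filter_mset (\<lambda>y. y \<noteq> x) A = filter_mset (\<lambda>y. y \<noteq> x) B"
  shows "A = B"
proof (rule multiset_eqI)
  show "count A y = count B y" for y
    using assms(1) arg_cong[OF assms(2), of "\<lambda>M. count M y"] by (cases "y = x") simp_all
qed

lemma irreducible_N1_factorisation_of_value_9_unique:
  fixes A B :: "nat poly multiset"
  assumes irr: "\<forall>Q\<in>#A. irreducible_N1 Q" "\<forall>Q\<in>#B. irreducible_N1 Q"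
    and prod: "prod_mset A = prod_mset B" and nine: "poly (prod_mset A) 1 = 9"
  shows "A = B"
proof -
  let ?X = "monom 1 1 :: nat poly"
  define A' B' where "A' = filter_mset (\<lambda>Q. Q \<noteq> ?X) A" and "B' = filter_mset (\<lambda>Q. Q \<noteq> ?X) B"
  have irr': "\<forall>Q\<in>#A'. irreducible_N1 Q \<and> Q \<noteq> ?X" "\<forall>Q\<in>#B'. irreducible_N1 Q \<and> Q \<noteq> ?X"
    using irr by (auto simp: A'_def B'_def)
  then have coeff_0: "coeff (prod_mset A') 0 \<noteq> 0" "coeff (prod_mset B') 0 \<noteq> 0"
    by (metis coeff_0_prod_mset_nonzero irreducible_N1_coeff_0)+
  have split: "monom 1 (count A ?X) * prod_mset A' = monom 1 (count B ?X) * prod_mset B'"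
    using prod_mset_split_monom_1_1[of A] prod_mset_split_monom_1_1[of B] prod
    unfolding A'_def B'_def by simp
  have "poly (prod_mset A') 1 = 9"
    using nine unfolding prod_mset_split_monom_1_1[of A] A'_def by (simp add: poly_monom)
  with irr' monom_mult_cancel(2)[OF split coeff_0] have "A' = B'"
    by (rule X_free_irreducible_factorisation_of_value_9_unique)
  with monom_mult_cancel(1)[OF split coeff_0] show "A = B"
    unfolding A'_def B'_def by (rule multiset_eq_by_count_and_filter_neq)
qed

theorem mainTheorem11:
  fixes P :: "nat poly"
  assumes "poly P 1 = 9"
  shows "(\<exists>A :: nat poly multiset. (\<forall>Q\<in>#A. irreducible_N1 Q) \<and> prod_mset A = P)
       \<and> (\<forall>A B :: nat poly multiset.
            (\<forall>Q\<in>#A. irreducible_N1 Q) \<longrightarrow> (\<forall>Q\<in>#B. irreducible_N1 Q) \<longrightarrow>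
            prod_mset A = P \<longrightarrow> prod_mset B = P \<longrightarrow> A = B)"
proof (intro conjI allI impI)
  from assms have "P \<noteq> 0"
    by auto
  then show "\<exists>A. (\<forall>Q\<in>#A. irreducible_N1 Q) \<and> prod_mset A = P"
    by (rule irreducible_N1_factorisation_exists)
next
  fix A B :: "nat poly multiset"
  assume "\<forall>Q\<in>#A. irreducible_N1 Q" "\<forall>Q\<in>#B. irreducible_N1 Q" "prod_mset A = P" "prod_mset B = P"
  with assms show "A = B"
    using irreducible_N1_factorisation_of_value_9_unique by simp
qed

end
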